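(* Let $\mu$ and $\nu$ be probability distributions on $\mathcal{X}\subseteq\mathbb{R}^d$, and let $\mathcal{P}\subseteq\{1,\dots,d\}$ be a set of protected attributes such that every $x\in\mathcal{X}$ satisfies $x_p\in\{0,1\}$ for all $p\in\mathcal{P}$. Let $x_1,\dots,x_{N_1}$ be independent samples from $\mu$ and $x'_1,\dots,x'_{N_2}$ independent samples from $\nu$ (the two samples independent of each other), and let $\hat\mu=\frac{1}{N_1}\sum_{i=1}^{N_1}\delta_{x_i}$ and $\hat\nu=\frac{1}{N_2}\sum_{i=1}^{N_2}\delta_{x'_i}$ be the empirical distributions. Fix $\delta>0$ and set $N=\min(N_1,N_2)$. Then with probability at least $1-2\delta$ over the samples, $$\mathrm{MSD}(\mu,\nu;\mathcal{P})\le \mathrm{MSD}(\hat\mu,\hat\nu;\mathcal{P})+4\sqrt{\frac{2|\mathcal{P}|+\log\frac{2}{\delta}}{2N}}.$$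
   Context: For $x\in\mathbb{R}^d$ and $p\in\mathcal{P}$, $x_p$ denotes the $p$-th coordinate and $\bar x_p:=1-x_p$. The set of literals is $\mathcal{L}=\{x\mapsto x_p,\ x\mapsto\bar x_p : p\in\mathcal{P}\}$. For a subset $S\subseteq\mathcal{L}$ (called a subgroup), the term $\chi_S:\mathbb{R}^d\to\{0,1\}$ is $\chi_S(x)=\prod_{s\in S}s(x)$ (the empty product being $1$). Let $\mathcal{S}$ denote the set of all subgroups $S\subseteq\mathcal{L}$. For a distribution $\mu$ and function $f$, $\mu(f)=\int f\,d\mu$. The Maximum Subgroup Discrepancy is $\mathrm{MSD}(\mu,\nu;\mathcal{P})=\sup_{S\in\mathcal{S}}|\mu(\chi_S)-\nu(\chi_S)|$. $\delta_x$ is the point mass at $x$, and $\log$ is the natural logarithm. *)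

theory Defs
  imports "HOL-Probability.Probability"
begin

definition literals :: "'d set \<Rightarrow> ('d \<times> bool) set" where
  "literals P = P \<times> UNIV"

definition lit :: "'d \<times> bool \<Rightarrow> real ^ 'd \<Rightarrow> real" where
  "lit l x = (if snd l then x $ fst l else 1 - x $ fst l)"

definition chi :: "('d \<times> bool) set \<Rightarrow> real ^ 'd \<Rightarrow> real" where
  "chi S x = (\<Prod>l\<in>S. lit l x)"

definition subgroups :: "'d set \<Rightarrow> ('d \<times> bool) set set" where
  "subgroups P = Pow (literals P)"

definition MSD :: "(real ^ 'd) measure \<Rightarrow> (real ^ 'd) measure \<Rightarrow> 'd set \<Rightarrow> real" where
  "MSD \<mu> \<nu> P = (SUP S\<in>subgroups P. \<bar>integral\<^sup>L \<mu> (chi S) - integral\<^sup>L \<nu> (chi S)\<bar>)"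

definition emp :: "nat \<Rightarrow> (nat \<Rightarrow> 'a) \<Rightarrow> 'a measure" where
  "emp n xs = measure_pmf (map_pmf xs (pmf_of_set {..<n}))"

end

theory Submission
  imports Defs
begin

text \<open>On the support of the distributions every term \<open>chi S\<close> takes values in \<open>[0, 1]\<close>,
  so Hoeffding's inequality controls the deviation of each of its empirical means, and a union
  bound over the \<open>4 ^ card P\<close> subgroups shows that with probability at least \<open>1 - \<delta>\<close> the
  empirical distribution of the first sample is uniformly \<open>t\<close>-close to \<open>\<mu>\<close>, i.e.
  \<open>MSD \<mu> (emp N1 xs) P < t\<close> for \<open>t = sqrt ((2 card P + ln (2 / \<delta>)) / (2 min N1 N2))\<close>;
  likewise for \<open>\<nu>\<close>. On the intersection of the two events the triangle inequality for MSD gives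
  \<open>MSD \<mu> \<nu> P \<le> MSD (emp N1 xs) (emp N2 ys) P + 2 t\<close>, so the constant 4 of the statement
  leaves a factor 2 to spare.\<close>

lemma prob_space_indep_vars_PiM_components:
  assumes "\<And>i. i \<in> I \<Longrightarrow> prob_space (M i)" and "I \<noteq> {}"
  shows "prob_space.indep_vars (PiM I M) M (\<lambda>i \<omega>. \<omega> i) I"
proof -
  interpret prob_space "PiM I M" by (intro prob_space_PiM assms)
  have "distr (PiM I M) (PiM I M) (\<lambda>\<omega>. restrict \<omega> I) = distr (PiM I M) (PiM I M) (\<lambda>\<omega>. \<omega>)"
    by (intro distr_cong) (auto simp: space_PiM)
  also have "\<dots> = PiM I (\<lambda>i. distr (PiM I M) (M i) (\<lambda>\<omega>. \<omega> i))"
    by (auto intro!: PiM_cong distr_PiM_component[symmetric] assms)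
  finally show ?thesis
    by (subst indep_vars_iff_distr_eq_PiM'[OF assms(2)]) auto
qed

lemma prob_empirical_mean_deviation_ge:
  fixes M :: "'a measure" and f :: "'a \<Rightarrow> real"
  assumes M: "prob_space M" and f: "f \<in> borel_measurable M"
    and bounded: "AE x in M. f x \<in> {a..b}" and "a < b" and "0 < n" and "0 \<le> t"
  shows "measure (PiM {..<n} (\<lambda>_. M))
           {xs \<in> space (PiM {..<n} (\<lambda>_. M)). t \<le> \<bar>(\<Sum>i<n. f (xs i)) / real n - integral\<^sup>L M f\<bar>}
         \<le> 2 * exp (-2 * real n * t\<^sup>2 / (b - a)\<^sup>2)"
proof -
  let ?M = "PiM {..<n} (\<lambda>_. M)"
  interpret prob_space ?M by (intro prob_space_PiM M)
  have first: "0 \<in> {..<n}" using \<open>0 < n\<close> by simp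
  have coord_distr: "distr ?M M (\<lambda>\<omega>. \<omega> i) = M" if "i \<in> {..<n}" for i
    by (rule distr_PiM_component) (use M that in auto)
  have f_coord_distr: "distr ?M borel (\<lambda>\<omega>. f (\<omega> i)) = distr M borel f" if "i \<in> {..<n}" for i
    using distr_distr[of f M borel "\<lambda>\<omega>. \<omega> i" ?M] f that by (simp add: coord_distr comp_def)
  have expectation_f: "expectation (\<lambda>\<omega>. f (\<omega> 0)) = integral\<^sup>L M f"
    using integral_distr[OF measurable_component_singleton[OF first] f] coord_distr[OF first]
    by simp
  interpret Hoeffding_ineq_iid ?M "{..<n}" "\<lambda>i \<omega>. f (\<omega> i)" "\<lambda>\<omega>. f (\<omega> 0)" a b
    "expectation (\<lambda>\<omega>. f (\<omega> 0))"
  proof unfold_locales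
    have "indep_vars (\<lambda>_. M) (\<lambda>i \<omega>. \<omega> i) {..<n}"
      using prob_space_indep_vars_PiM_components[of "{..<n}" "\<lambda>_. M"] M first by auto
    then show "indep_vars (\<lambda>_. borel) (\<lambda>i \<omega>. f (\<omega> i)) {..<n}"
      using indep_vars_compose2[of "\<lambda>_. M" _ _ "\<lambda>_. f" "\<lambda>_. borel"] f by simp
    show "AE \<omega> in ?M. f (\<omega> 0) \<in> {a..b}"
      using AE_PiM_component[of "{..<n}" "\<lambda>_. M" 0 "\<lambda>x. f x \<in> {a..b}"] M first bounded
      by simp
  qed (use f_coord_distr first f in auto)
  show ?thesis
    using Hoeffding_ineq_abs_ge'[OF \<open>0 \<le> t\<close> \<open>a < b\<close>] \<open>0 < n\<close>
    by (simp add: expectation_f lessThan_empty_iff)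
qed

lemma measure_pair_measure_ge_of_Times_subset:
  assumes "prob_space M1" "prob_space M2" "A \<in> sets M1" "B \<in> sets M2"
    and "A \<times> B \<subseteq> C" "C \<in> sets (M1 \<Otimes>\<^sub>M M2)"
  shows "measure M1 A + measure M2 B - 1 \<le> measure (M1 \<Otimes>\<^sub>M M2) C"
proof -
  interpret M1: prob_space M1 by fact
  interpret M2: prob_space M2 by fact
  interpret pair_prob_space M1 M2 ..
  have "0 \<le> (1 - measure M1 A) * (1 - measure M2 B)"
    by (simp add: M1.prob_le_1 M2.prob_le_1)
  then have "measure M1 A + measure M2 B - 1 \<le> measure M1 A * measure M2 B"
    by (simp add: algebra_simps)
  also have "\<dots> = measure (M1 \<Otimes>\<^sub>M M2) (A \<times> B)"
    using M2.emeasure_pair_measure_Times[OF assms(3,4)] by (simp add: measure_def enn2real_mult)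
  also have "\<dots> \<le> measure (M1 \<Otimes>\<^sub>M M2) C"
    using assms by (intro finite_measure_mono) auto
  finally show ?thesis .
qed

lemma chi_borel_measurable [measurable]: "chi S \<in> borel_measurable borel"
  unfolding chi_def lit_def by measurable

lemma chi_measurable: "sets M = sets borel \<Longrightarrow> chi S \<in> borel_measurable M"
  using measurable_cong_sets[of M borel borel borel] by simp

lemma chi_mem_unit_interval:
  assumes "\<forall>p\<in>P. x $ p \<in> {0, 1}" and "S \<in> subgroups P"
  shows "chi S x \<in> {0..1}"
proof -
  have "lit l x \<in> {0..1}" if "l \<in> S" for l
  proof -
    have "fst l \<in> P" using assms(2) that by (auto simp: subgroups_def literals_def)
    then show ?thesis using assms(1) by (auto simp: lit_def)
  qed
  then show ?thesis
    unfolding chi_def by (auto intro!: prod_nonneg prod_le_1)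
qed

lemma subgroups_nonempty: "subgroups P \<noteq> {}"
  by (auto simp: subgroups_def)

lemma finite_subgroups: "finite P \<Longrightarrow> finite (subgroups P)"
  unfolding subgroups_def literals_def by simp

lemma card_subgroups:
  assumes "finite P" shows "card (subgroups P) = 4 ^ card P"
proof -
  have "card (literals P) = 2 * card P"
    using assms by (simp add: literals_def card_cartesian_product)
  moreover have "finite (literals P)"
    using assms by (simp add: literals_def)
  ultimately show ?thesis
    by (simp add: subgroups_def card_Pow power_mult)
qed

lemma MSD_eq_Max:
  "MSD \<mu> \<nu> P = Max ((\<lambda>S. \<bar>integral\<^sup>L \<mu> (chi S) - integral\<^sup>L \<nu> (chi S)\<bar>) ` subgroups P)"
  unfolding MSD_def by (intro cSup_eq_Max) (simp_all add: finite_subgroups subgroups_nonempty)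

lemma MSD_ge:
  "S \<in> subgroups P \<Longrightarrow> \<bar>integral\<^sup>L \<mu> (chi S) - integral\<^sup>L \<nu> (chi S)\<bar> \<le> MSD \<mu> \<nu> P"
  unfolding MSD_eq_Max by (intro Max_ge) (auto simp: finite_subgroups)

lemma MSD_commute: "MSD \<mu> \<nu> P = MSD \<nu> \<mu> P"
  unfolding MSD_def by (simp add: abs_minus_commute)

lemma MSD_triangle: "MSD \<mu> \<nu> P \<le> MSD \<mu> \<rho> P + MSD \<rho> \<nu> P"
  unfolding MSD_def[of \<mu> \<nu>]
proof (rule cSUP_least)
  show "subgroups P \<noteq> {}" by (fact subgroups_nonempty)
next
  fix S assume "S \<in> subgroups P"
  then have "\<bar>integral\<^sup>L \<mu> (chi S) - integral\<^sup>L \<rho> (chi S)\<bar> \<le> MSD \<mu> \<rho> P"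
    and "\<bar>integral\<^sup>L \<rho> (chi S) - integral\<^sup>L \<nu> (chi S)\<bar> \<le> MSD \<rho> \<nu> P"
    by (simp_all add: MSD_ge)
  then show "\<bar>integral\<^sup>L \<mu> (chi S) - integral\<^sup>L \<nu> (chi S)\<bar> \<le> MSD \<mu> \<rho> P + MSD \<rho> \<nu> P"
    by linarith
qed

lemma MSD_le_add_MSD: "MSD \<mu> \<nu> P \<le> MSD \<mu> \<mu>' P + MSD \<mu>' \<nu>' P + MSD \<nu> \<nu>' P"
  using MSD_triangle[of \<mu> \<nu> P \<mu>'] MSD_triangle[of \<mu>' \<nu> P \<nu>'] MSD_commute[of \<nu>' \<nu> P] by linarith

lemma borel_measurable_MSD:
  assumes "\<And>S. (\<lambda>\<omega>. integral\<^sup>L (\<mu> \<omega>) (chi S)) \<in> borel_measurable M"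
    and "\<And>S. (\<lambda>\<omega>. integral\<^sup>L (\<nu> \<omega>) (chi S)) \<in> borel_measurable M"
  shows "(\<lambda>\<omega>. MSD (\<mu> \<omega>) (\<nu> \<omega>) P) \<in> borel_measurable M"
  unfolding MSD_eq_Max using assms by (intro borel_measurable_Max finite_subgroups) auto

lemma integral_emp: "0 < n \<Longrightarrow> integral\<^sup>L (emp n xs) f = (\<Sum>i<n. f (xs i)) / real n"
  unfolding emp_def by (simp add: integral_pmf_of_set lessThan_empty_iff)

lemma borel_measurable_integral_emp:
  fixes f :: "'a \<Rightarrow> real"
  assumes "0 < n" and "f \<in> borel_measurable M"
  shows "(\<lambda>xs. integral\<^sup>L (emp n xs) f) \<in> borel_measurable (PiM {..<n} (\<lambda>_. M))"
proof -
  have "(\<lambda>xs. f (xs i)) \<in> borel_measurable (PiM {..<n} (\<lambda>_. M))" if "i \<in> {..<n}" for i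
    using measurable_compose[OF measurable_component_singleton[OF that] assms(2)] by simp
  then show ?thesis
    by (simp add: integral_emp[OF \<open>0 < n\<close>] borel_measurable_sum)
qed

lemma borel_measurable_MSD_emp:
  assumes "sets \<mu> = sets borel" and "0 < n"
  shows "(\<lambda>xs. MSD \<mu> (emp n xs) P) \<in> borel_measurable (PiM {..<n} (\<lambda>_. \<mu>))"
  using assms by (intro borel_measurable_MSD borel_measurable_const borel_measurable_integral_emp
      chi_measurable)

lemma borel_measurable_MSD_emp_pair:
  assumes "sets \<mu> = sets borel" "sets \<nu> = sets borel" and "0 < n" "0 < m"
  shows "(\<lambda>z. MSD (emp n (fst z)) (emp m (snd z)) P)
    \<in> borel_measurable (PiM {..<n} (\<lambda>_. \<mu>) \<Otimes>\<^sub>M PiM {..<m} (\<lambda>_. \<nu>))"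
  using assms by (intro borel_measurable_MSD measurable_compose[OF measurable_fst]
      measurable_compose[OF measurable_snd] borel_measurable_integral_emp chi_measurable)

lemma prob_MSD_emp_ge:
  fixes \<mu> :: "(real ^ 'd) measure"
  assumes \<mu>: "prob_space \<mu>" "sets \<mu> = sets borel"
    and binary: "AE x in \<mu>. \<forall>p\<in>P. x $ p \<in> {0, 1}" and "0 < n" and "0 \<le> t"
  shows "measure (PiM {..<n} (\<lambda>_. \<mu>))
           {xs \<in> space (PiM {..<n} (\<lambda>_. \<mu>)). t \<le> MSD \<mu> (emp n xs) P}
         \<le> 4 ^ card P * (2 * exp (-2 * real n * t\<^sup>2))"
proof -
  let ?M = "PiM {..<n} (\<lambda>_. \<mu>)"
  define dev where "dev S = {xs \<in> space ?M.
    t \<le> \<bar>(\<Sum>i<n. chi S (xs i)) / real n - integral\<^sup>L \<mu> (chi S)\<bar>}" for S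
  have dev_sets: "dev S \<in> sets ?M" for S
  proof -
    have [measurable]: "(\<lambda>xs. (\<Sum>i<n. chi S (xs i)) / real n) \<in> borel_measurable ?M"
      using borel_measurable_integral_emp[OF \<open>0 < n\<close> chi_measurable[OF \<mu>(2)]]
      by (simp add: integral_emp[OF \<open>0 < n\<close>])
    show ?thesis unfolding dev_def by measurable
  qed
  have dev_prob: "measure ?M (dev S) \<le> 2 * exp (-2 * real n * t\<^sup>2)" if "S \<in> subgroups P" for S
  proof -
    have "AE x in \<mu>. chi S x \<in> {0..1}"
      using binary by eventually_elim (use chi_mem_unit_interval that in auto)
    from prob_empirical_mean_deviation_ge[OF \<mu>(1) chi_measurable[OF \<mu>(2)] this]
    show ?thesis using \<open>0 < n\<close> \<open>0 \<le> t\<close> by (simp add: dev_def)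
  qed
  have "{xs \<in> space ?M. t \<le> MSD \<mu> (emp n xs) P} = (\<Union>S\<in>subgroups P. dev S)"
    by (auto simp: dev_def MSD_eq_Max Max_ge_iff finite_subgroups subgroups_nonempty
        integral_emp[OF \<open>0 < n\<close>] abs_minus_commute)
  also have "measure ?M \<dots> \<le> (\<Sum>S\<in>subgroups P. measure ?M (dev S))"
    by (intro measure_UNION_le finite_subgroups dev_sets) simp
  also have "\<dots> \<le> (\<Sum>S\<in>subgroups P. 2 * exp (-2 * real n * t\<^sup>2))"
    by (intro sum_mono dev_prob)
  also have "\<dots> = 4 ^ card P * (2 * exp (-2 * real n * t\<^sup>2))"
    by (simp add: card_subgroups)
  finally show ?thesis .
qed

lemma Hoeffding_union_bound_le:
  fixes k n N :: nat and \<delta> :: real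
  assumes "0 < \<delta>" "\<delta> \<le> 2" "0 < N" "N \<le> n"
  shows "4 ^ k * (2 * exp (-2 * real n * (sqrt ((2 * real k + ln (2 / \<delta>)) / (2 * real N)))\<^sup>2))
         \<le> \<delta>"
proof -
  define q where "q = (2 * real k + ln (2 / \<delta>)) / (2 * real N)"
  have "0 \<le> q" using assms by (simp add: q_def)
  then have "exp (-2 * real n * q) \<le> exp (-2 * real N * q)"
    using assms(4) by (simp add: mult_right_mono)
  also have "-2 * real N * q = - (2 * real k) - ln (2 / \<delta>)"
    using assms by (simp add: q_def field_simps)
  also have "exp \<dots> = exp (- (2 * real k)) * (\<delta> / 2)"
    using assms by (simp add: exp_diff exp_minus)
  finally have tail: "exp (-2 * real n * q) \<le> exp (- (2 * real k)) * (\<delta> / 2)" .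
  have exp_1: "2 \<le> exp (1::real)"
    using exp_ge_add_one_self[of 1] by simp
  have "4 \<le> exp (2::real)"
    using mult_mono[OF exp_1 exp_1] by (simp flip: exp_add)
  then have "(4::real) ^ k \<le> exp 2 ^ k"
    by (rule power_mono) simp
  also have "\<dots> = exp (2 * real k)"
    by (simp add: exp_of_nat_mult[symmetric] mult.commute)
  finally have four_pow: "4 ^ k * exp (- (2 * real k)) \<le> 1"
    by (simp add: exp_minus field_simps)
  have "4 ^ k * (2 * exp (-2 * real n * q)) \<le> 4 ^ k * (2 * (exp (- (2 * real k)) * (\<delta> / 2)))"
    using tail by simp
  also have "\<dots> = (4 ^ k * exp (- (2 * real k))) * \<delta>" by simp
  also have "\<dots> \<le> \<delta>"
    using four_pow assms(1) by (simp add: mult_left_le_one_le)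
  finally show ?thesis using \<open>0 \<le> q\<close> by (simp add: q_def)
qed

lemma prob_MSD_emp_less:
  fixes \<mu> :: "(real ^ 'd) measure"
  assumes \<mu>: "prob_space \<mu>" "sets \<mu> = sets borel"
    and binary: "AE x in \<mu>. \<forall>p\<in>P. x $ p \<in> {0, 1}"
    and "0 < N" "N \<le> n" "0 < \<delta>" "\<delta> \<le> 2"
  defines "t \<equiv> sqrt ((2 * real (card P) + ln (2 / \<delta>)) / (2 * real N))"
  shows "1 - \<delta> \<le> measure (PiM {..<n} (\<lambda>_. \<mu>))
           {xs \<in> space (PiM {..<n} (\<lambda>_. \<mu>)). MSD \<mu> (emp n xs) P < t}"
proof -
  let ?M = "PiM {..<n} (\<lambda>_. \<mu>)"
  interpret prob_space ?M by (intro prob_space_PiM \<mu>)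
  have "0 < n" and "0 \<le> t" using assms by (simp_all add: t_def)
  have "{xs \<in> space ?M. t \<le> MSD \<mu> (emp n xs) P} \<in> sets ?M"
    using borel_measurable_MSD_emp[OF \<mu>(2) \<open>0 < n\<close>] by measurable
  moreover have "{xs \<in> space ?M. MSD \<mu> (emp n xs) P < t}
      = space ?M - {xs \<in> space ?M. t \<le> MSD \<mu> (emp n xs) P}"
    by auto
  moreover have "prob {xs \<in> space ?M. t \<le> MSD \<mu> (emp n xs) P} \<le> \<delta>"
    using order_trans[OF prob_MSD_emp_ge[OF \<mu> binary \<open>0 < n\<close> \<open>0 \<le> t\<close>]
        Hoeffding_union_bound_le[OF assms(6,7,4,5), where k = "card P", folded t_def]] .
  ultimately show ?thesis by (simp add: prob_compl)
qed

lemma prob_MSD_le_MSD_emp_add: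
  fixes \<mu> \<nu> :: "(real ^ 'd) measure"
  assumes \<mu>: "prob_space \<mu>" "sets \<mu> = sets borel" "AE x in \<mu>. \<forall>p\<in>P. x $ p \<in> {0, 1}"
    and \<nu>: "prob_space \<nu>" "sets \<nu> = sets borel" "AE x in \<nu>. \<forall>p\<in>P. x $ p \<in> {0, 1}"
    and "0 < N1" "0 < N2" "0 < \<delta>" "\<delta> \<le> 2"
    and s: "2 * sqrt ((2 * real (card P) + ln (2 / \<delta>)) / (2 * real (min N1 N2))) \<le> s"
  shows "1 - 2 * \<delta> \<le> measure (PiM {..<N1} (\<lambda>_. \<mu>) \<Otimes>\<^sub>M PiM {..<N2} (\<lambda>_. \<nu>))
    {(xs, ys) \<in> space (PiM {..<N1} (\<lambda>_. \<mu>) \<Otimes>\<^sub>M PiM {..<N2} (\<lambda>_. \<nu>)).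
      MSD \<mu> \<nu> P \<le> MSD (emp N1 xs) (emp N2 ys) P + s}"
proof -
  let ?M1 = "PiM {..<N1} (\<lambda>_. \<mu>)" and ?M2 = "PiM {..<N2} (\<lambda>_. \<nu>)"
  define t where "t = sqrt ((2 * real (card P) + ln (2 / \<delta>)) / (2 * real (min N1 N2)))"
  define A where "A = {xs \<in> space ?M1. MSD \<mu> (emp N1 xs) P < t}"
  define B where "B = {ys \<in> space ?M2. MSD \<nu> (emp N2 ys) P < t}"
  define T where "T = {z \<in> space (?M1 \<Otimes>\<^sub>M ?M2).
    MSD \<mu> \<nu> P \<le> MSD (emp N1 (fst z)) (emp N2 (snd z)) P + s}"
  note [measurable] = borel_measurable_MSD_emp[OF \<mu>(2) \<open>0 < N1\<close>]
    borel_measurable_MSD_emp[OF \<nu>(2) \<open>0 < N2\<close>]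
    borel_measurable_MSD_emp_pair[OF \<mu>(2) \<nu>(2) \<open>0 < N1\<close> \<open>0 < N2\<close>]
  have "1 - \<delta> \<le> measure ?M1 A" "1 - \<delta> \<le> measure ?M2 B"
    unfolding A_def B_def t_def using assms by (auto intro!: prob_MSD_emp_less)
  moreover have "measure ?M1 A + measure ?M2 B - 1 \<le> measure (?M1 \<Otimes>\<^sub>M ?M2) T"
  proof (rule measure_pair_measure_ge_of_Times_subset)
    show "A \<times> B \<subseteq> T"
    proof safe
      fix xs ys assume "xs \<in> A" "ys \<in> B"
      then show "(xs, ys) \<in> T"
        using MSD_le_add_MSD[of \<mu> \<nu> P "emp N1 xs" "emp N2 ys"] s
        by (auto simp: A_def B_def T_def t_def space_pair_measure)
    qed
  qed (use \<mu> \<nu> in \<open>simp_all add: A_def B_def T_def prob_space_PiM\<close>)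
  ultimately show ?thesis by (simp add: T_def split_beta')
qed

theorem theorem3p1:
  fixes \<mu> \<nu> :: "(real ^ 'd) measure" and X :: "(real ^ 'd) set" and P :: "'d set"
    and N1 N2 :: nat and \<delta> :: real
  assumes "prob_space \<mu>" and "sets \<mu> = sets borel"
    and "prob_space \<nu>" and "sets \<nu> = sets borel"
    and "X \<in> sets borel" and "emeasure \<mu> X = 1" and "emeasure \<nu> X = 1"
    and "\<forall>x\<in>X. \<forall>p\<in>P. x $ p \<in> {0, 1}"
    and "N1 \<ge> 1" and "N2 \<ge> 1" and "\<delta> > 0"
  shows "measure ((\<Pi>\<^sub>M i\<in>{..<N1}. \<mu>) \<Otimes>\<^sub>M (\<Pi>\<^sub>M i\<in>{..<N2}. \<nu>))
           {(xs, ys) \<in> space ((\<Pi>\<^sub>M i\<in>{..<N1}. \<mu>) \<Otimes>\<^sub>M (\<Pi>\<^sub>M i\<in>{..<N2}. \<nu>)).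
              MSD \<mu> \<nu> P \<le> MSD (emp N1 xs) (emp N2 ys) P
                + 4 * sqrt ((2 * real (card P) + ln (2 / \<delta>)) / (2 * real (min N1 N2)))}
         \<ge> 1 - 2 * \<delta>"
proof -
  have binary: "AE x in \<rho>. \<forall>p\<in>P. x $ p \<in> {0, 1}"
    if "prob_space \<rho>" "sets \<rho> = sets borel" "emeasure \<rho> X = 1" for \<rho>
  proof -
    have "AE x in \<rho>. x \<in> X"
      using prob_space.AE_in_set_eq_1[OF that(1), of X] that assms(5) by (simp add: measure_def)
    then show ?thesis by eventually_elim (use assms(8) in auto)
  qed
  show ?thesis
  proof (cases "\<delta> \<le> 2")
    case True
    have "0 \<le> sqrt ((2 * real (card P) + ln (2 / \<delta>)) / (2 * real (min N1 N2)))"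
      using True assms(11) by simp
    then show ?thesis
      using assms True binary by (intro prob_MSD_le_MSD_emp_add) auto
  qed (auto intro: order_trans[OF _ measure_nonneg])
qed

end
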